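(* Let $LS(n,k)$ be defined by $LS(0,0)=1$, $LS(n,k)=0$ if $k<0$ or $k>n$ (and $LS(n,k)=0$ for $n<0$), and $$LS(n,k)=(k^2+k)\,LS(n-1,k)+LS(n-1,k-1)\qquad (n\ge 1).$$ Then for every $n\ge 0$ the sequence $(LS(n,k))_{k}$ is log-concave in $k$.
   Context: A sequence $(a_k)$ is log-concave if $a_k^2\ge a_{k-1}a_{k+1}$ for all $k$. *)

theory Defs
  imports Main
begin

fun LS :: "nat \<Rightarrow> int \<Rightarrow> int" where
  "LS 0 k = (if k = 0 then 1 else 0)"
| "LS (Suc n) k = (if k < 0 \<or> k > int (Suc n) then 0
                   else (k^2 + k) * LS n k + LS n (k - 1))"

end

theory Submission
  imports Defs
begin

text \<open>
  We prove the stronger inequality \<open>(k + 1) LS(n, k - 1) LS(n, k + 1) \<le> k LS(n, k)\<^sup>2\<close>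
  by induction on \<open>n\<close>. Writing \<open>u, a, t, v\<close> for \<open>LS(n, k - 2), \<dots>, LS(n, k + 1)\<close>, the
  recurrence gives \<open>LS(n + 1, k - 1) = (k - 1) k a + u\<close>, \<open>LS(n + 1, k) = k (k + 1) t + a\<close> and
  \<open>LS(n + 1, k + 1) = (k + 1) (k + 2) v + t\<close>; the induction hypotheses at \<open>k - 1\<close> and \<open>k\<close>
  bound the products \<open>u t\<close>, \<open>a v\<close> and (multiplying them) \<open>u v\<close>, and the remaining terms of
  the expanded inequality are nonnegative. The factor \<open>k / (k + 1) < 1\<close> then yields
  log-concavity.
\<close>

lemma ratio_log_concave_step:
  fixes k u a t v :: "'a::linordered_idom"
  assumes k: "k \<ge> 1" and u: "u \<ge> 0" and a: "a > 0" and t: "t > 0" and v: "v \<ge> 0"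
    and lower: "k * u * t \<le> (k - 1) * a\<^sup>2"
    and upper: "(k + 1) * a * v \<le> k * t\<^sup>2"
  shows "(k + 1) * ((k - 1) * k * a + u) * ((k + 1) * (k + 2) * v + t)
           \<le> k * (k * (k + 1) * t + a)\<^sup>2"
proof -
  have "(k * a * t) * ((k + 1) * u * v) = (k * u * t) * ((k + 1) * a * v)"
    by (simp add: algebra_simps)
  also have "\<dots> \<le> ((k - 1) * a\<^sup>2) * (k * t\<^sup>2)"
    using k u t a v by (intro mult_mono[OF lower upper]) auto
  also have "\<dots> = (k * a * t) * ((k - 1) * a * t)"
    by (simp add: algebra_simps power2_eq_square)
  finally have outer: "(k + 1) * u * v \<le> (k - 1) * a * t"
    using k a t by (simp add: mult_le_cancel_left_pos)
  define c1 where "c1 = (k - 1) * k"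
  define c2 where "c2 = (k + 1) * (k + 2)"
  have "c1 \<ge> 0" "c2 \<ge> 0"
    using k unfolding c1_def c2_def by auto
  with k have bounds:
    "k * c1 * c2 * ((k + 1) * a * v) \<le> k * c1 * c2 * (k * t\<^sup>2)"
    "k * c2 * ((k + 1) * u * v) \<le> k * c2 * ((k - 1) * a * t)"
    "(k + 1) * (k * u * t) \<le> (k + 1) * ((k - 1) * a\<^sup>2)"
    using upper outer lower by (simp_all add: mult_left_mono)
  have rest: "2 * k^3 * (k + 1) * t\<^sup>2 + 2 * k * (k + 1) * a * t + a\<^sup>2 \<ge> 0"
    using k a t by simp
  have "k * ((k + 1) * ((k - 1) * k * a + u) * ((k + 1) * (k + 2) * v + t))
      = k * c1 * c2 * ((k + 1) * a * v) + k * (k + 1) * c1 * a * t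
        + k * c2 * ((k + 1) * u * v) + (k + 1) * (k * u * t)"
    unfolding c1_def c2_def by (simp add: algebra_simps)
  also have "\<dots> \<le> k * c1 * c2 * (k * t\<^sup>2) + k * (k + 1) * c1 * a * t
        + k * c2 * ((k - 1) * a * t) + (k + 1) * ((k - 1) * a\<^sup>2)
        + (2 * k^3 * (k + 1) * t\<^sup>2 + 2 * k * (k + 1) * a * t + a\<^sup>2)"
    using bounds rest by (simp add: add_mono)
  also have "\<dots> = k * (k * (k * (k + 1) * t + a)\<^sup>2)"
    unfolding c1_def c2_def by (simp add: algebra_simps power2_eq_square power3_eq_cube)
  finally show ?thesis
    using k by (simp add: mult_le_cancel_left_pos)
qed

lemma LS_eq_0: "k < 0 \<or> k > int n \<Longrightarrow> LS n k = 0"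
  by (induction n arbitrary: k) auto

lemma LS_nonneg: "LS n k \<ge> 0"
  by (induction n arbitrary: k) auto

lemma LS_Suc: "k \<ge> 0 \<Longrightarrow> LS (Suc n) k = k * (k + 1) * LS n k + LS n (k - 1)"
  using LS_eq_0[of k n] LS_eq_0[of "k - 1" n] by (simp add: power2_eq_square algebra_simps)

lemma LS_pos: "1 \<le> k \<Longrightarrow> k \<le> int n \<Longrightarrow> LS n k > 0"
proof (induction n arbitrary: k)
  case 0
  then show ?case by simp
next
  case (Suc n)
  show ?case
  proof (cases "k = 1")
    case True
    then show ?thesis
      using Suc.IH[of 1] LS_nonneg[of n 0] by (cases n) (auto simp: LS_Suc)
  next
    case False
    then have "LS n (k - 1) > 0"
      using Suc by simp
    then show ?thesis
      using Suc.prems LS_nonneg[of n k] by (simp add: LS_Suc add_nonneg_pos)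
  qed
qed

lemma LS_ratio_log_concave: "(k + 1) * LS n (k - 1) * LS n (k + 1) \<le> k * (LS n k)\<^sup>2"
proof (induction n arbitrary: k)
  case 0
  then show ?case by auto
next
  case (Suc n)
  consider "k \<le> 1" | "k \<ge> int (Suc n)" | "2 \<le> k" "k \<le> int n"
    by linarith
  then show ?case
  proof cases
    case 1
    then have "LS (Suc n) (k - 1) = 0"
      using LS_eq_0[of "k - 1"] LS_eq_0[of "-1" n] by (cases "k = 1") (auto simp: LS_Suc)
    with 1 show ?thesis
      by (cases "k \<ge> 0") auto
  next
    case 2
    then show ?thesis
      using LS_eq_0[of "k + 1" "Suc n"] by simp
  next
    case 3
    have recurrence:
      "LS (Suc n) (k - 1) = (k - 1) * k * LS n (k - 1) + LS n (k - 2)"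
      "LS (Suc n) k = k * (k + 1) * LS n k + LS n (k - 1)"
      "LS (Suc n) (k + 1) = (k + 1) * (k + 2) * LS n (k + 1) + LS n k"
      using 3 LS_Suc[of "k - 1" n] LS_Suc[of k n] LS_Suc[of "k + 1" n]
      by (simp_all del: LS.simps add: algebra_simps)
    show ?thesis
      unfolding recurrence
    proof (rule ratio_log_concave_step)
      show "k * LS n (k - 2) * LS n k \<le> (k - 1) * (LS n (k - 1))\<^sup>2"
        using Suc.IH[of "k - 1"] by (simp add: algebra_simps)
      show "(k + 1) * LS n (k - 1) * LS n (k + 1) \<le> k * (LS n k)\<^sup>2"
        by (rule Suc.IH)
    qed (use 3 LS_nonneg LS_pos in auto)
  qed
qed

theorem mainTheorem6:
  fixes n :: nat and k :: int
  shows "(LS n k)^2 \<ge> LS n (k - 1) * LS n (k + 1)"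
proof (cases "k \<ge> 1")
  case True
  have "k * (LS n (k - 1) * LS n (k + 1)) \<le> (k + 1) * LS n (k - 1) * LS n (k + 1)"
    using LS_nonneg[of n "k - 1"] LS_nonneg[of n "k + 1"] by (simp add: algebra_simps)
  also have "\<dots> \<le> k * (LS n k)\<^sup>2"
    by (rule LS_ratio_log_concave)
  finally show ?thesis
    using True by (simp add: mult_le_cancel_left_pos)
next
  case False
  then show ?thesis
    using LS_eq_0[of "k - 1" n] by simp
qed

end
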